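(* Let $A_0$ be a commutative Noetherian ring, $d_1,\dots,d_g\in\mathbb{N}$, and let $A=A_0[Y_1,\dots,Y_g]$ be $\mathbb{Z}^2$-graded by $\deg Y_j=(d_j,1)$. Let $N$ be a finitely generated $\mathbb{Z}^2$-graded $A$-module and $\rho_N(v)=\sup\{i\in\mathbb{Z} : N_{(i,v)}\neq0\}$. Then there exists $v_0$ such that either $\rho_N(v)=-\infty$ for all $v\ge v_0$, or there are $\delta\in\{d_1,\dots,d_g\}$ and $c\in\mathbb{Z}$ with $\rho_N(v)=\delta v+c$ for all $v\ge v_0$.
   Context: Elements of $A_0$ have degree $(0,0)$; the supremum of the empty set is $-\infty$. *)

theory Defs
  imports "HOL-Library.Poly_Mapping" "HOL-Library.Extended_Real"
begin

(* A commutative ring is Noetherian if every ideal is finitely generated.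
  Ideals of r are the submodules of r over itself.*)
definition noetherian :: "'r::comm_ring_1 itself \<Rightarrow> bool" where
  "noetherian _ \<longleftrightarrow>
     (\<forall>I::'r set. module.subspace ((*) :: 'r \<Rightarrow> 'r \<Rightarrow> 'r) I \<longrightarrow>
        (\<exists>F. finite F \<and> I = module.span ((*) :: 'r \<Rightarrow> 'r \<Rightarrow> 'r) F))"

(* The polynomial ring A = A0[Y_j | j :: 'g] is the type ('g => nat) => 'r
  (monomials = exponent vectors).*)
definition monodeg :: "('g::finite \<Rightarrow> nat) \<Rightarrow> ('g \<Rightarrow>\<^sub>0 nat) \<Rightarrow> int \<times> int" where
  "monodeg d \<alpha> = ((\<Sum>j\<in>UNIV. int (Poly_Mapping.lookup \<alpha> j) * int (d j)), (\<Sum>j\<in>UNIV. int (Poly_Mapping.lookup \<alpha> j)))"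

definition Ahom :: "('g::finite \<Rightarrow> nat) \<Rightarrow> int \<times> int \<Rightarrow> (('g \<Rightarrow>\<^sub>0 nat) \<Rightarrow>\<^sub>0 'r::comm_ring_1) set" where
  "Ahom d a = {p. \<forall>\<alpha>\<in>Poly_Mapping.keys p. monodeg d \<alpha> = a}"

definition const :: "'r::comm_ring_1 \<Rightarrow> ('g \<Rightarrow>\<^sub>0 nat) \<Rightarrow>\<^sub>0 'r" where
  "const a = Poly_Mapping.single 0 a"

(* A Z^2-graded A-module: the module is the type 'm with scalar action sc,
  Nc k is the homogeneous component N_k (an A0-submodule), N is the internal
  direct sum of the N_k, and A_a N_b \<subseteq> N_(a+b).*)
definition graded_module ::
  "('g::finite \<Rightarrow> nat) \<Rightarrow> ((('g \<Rightarrow>\<^sub>0 nat) \<Rightarrow>\<^sub>0 'r::comm_ring_1) \<Rightarrow> 'm::ab_group_add \<Rightarrow> 'm)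
     \<Rightarrow> (int \<times> int \<Rightarrow> 'm set) \<Rightarrow> bool" where
  "graded_module d sc Nc \<longleftrightarrow>
     module sc \<and>
     (\<forall>k. module.subspace (\<lambda>a. sc (const a)) (Nc k)) \<and>
     (\<forall>x. \<exists>!h. finite {k. h k \<noteq> 0} \<and> (\<forall>k. h k \<in> Nc k) \<and> x = (\<Sum>k\<in>{k. h k \<noteq> 0}. h k)) \<and>
     (\<forall>p x a b. p \<in> Ahom d a \<longrightarrow> x \<in> Nc b \<longrightarrow> sc p x \<in> Nc (fst a + fst b, snd a + snd b))"

definition finitely_generated :: "('a::comm_ring_1 \<Rightarrow> 'm::ab_group_add \<Rightarrow> 'm) \<Rightarrow> bool" where
  "finitely_generated sc \<longleftrightarrow> (\<exists>F. finite F \<and> module.span sc F = UNIV)"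

(* rho_N(v) = sup {i. N_(i,v) \<noteq> 0}, with sup of the empty set = -\<infinity>.*)
definition rho :: "(int \<times> int \<Rightarrow> 'm::zero set) \<Rightarrow> int \<Rightarrow> ereal" where
  "rho Nc v = Sup ((\<lambda>i. ereal (of_int i)) ` {i. Nc (i, v) \<noteq> {0}})"

end

theory Submission
  imports Defs
begin

text \<open>
  The module N is generated by finitely many homogeneous elements z, so N_(i,v) is nonzero
  iff (i,v) = deg z + deg Y^alpha for a generator z and an exponent vector alpha with
  Y^alpha z nonzero. For fixed z these alpha form a downward closed subset of N^g, which by
  Dickson's lemma is a finite union of boxes: the coordinates in some set J are free, the
  others bounded. Among the alpha of total degree n in such a box, the largest weighted degree
  sum alpha_j d_j is, for large n, -infinity if the box is finite and delta n + c otherwise,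
  where delta is the largest d_j with j in J. So rho_N is a finite maximum of shifts of functions that are
  eventually -infinity or eventually affine with slope among the d_j, and this class of
  functions is closed under maxima and shifts.
\<close>

section \<open>Dickson's lemma and downward closed sets\<close>

lemma wellorder_seq_incseq_subseq:
  fixes u :: "nat \<Rightarrow> 'a::wellorder"
  obtains r where "strict_mono r" "incseq (\<lambda>n. u (r n))"
proof -
  obtain f where f: "strict_mono f" "monoseq (\<lambda>n. u (f n))"
    using seq_monosub by blast
  show thesis
  proof (cases "incseq (\<lambda>n. u (f n))")
    case True
    then show thesis using f that by blast
  next
    case False
    then have dec: "decseq (\<lambda>n. u (f n))"
      using f(2) by (simp add: monoseq_iff)
    define m where "m = (LEAST x. x \<in> range (\<lambda>n. u (f n)))"
    have "m \<in> range (\<lambda>n. u (f n))"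
      unfolding m_def by (rule LeastI[of _ "u (f 0)"]) simp
    then obtain N where N: "u (f N) = m"
      by blast
    have "u (f n) = m" if "N \<le> n" for n
    proof (rule antisym)
      show "u (f n) \<le> m"
        using dec that unfolding N[symmetric] decseq_def by blast
      show "m \<le> u (f n)"
        unfolding m_def by (rule Least_le) simp
    qed
    then have "incseq (\<lambda>n. u (f (n + N)))"
      by (simp add: incseq_def)
    moreover have "strict_mono (\<lambda>n. f (n + N))"
      using f(1) by (simp add: strict_mono_def)
    ultimately show thesis using that by blast
  qed
qed

lemma incseq_subseq_on_coordinates:
  fixes s :: "nat \<Rightarrow> 'g \<Rightarrow> 'a::wellorder"
  assumes "finite S"
  obtains r where "strict_mono r" "\<forall>j\<in>S. incseq (\<lambda>n. s (r n) j)"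
  using assms
proof (induction S arbitrary: thesis rule: finite_induct)
  case empty
  show ?case by (rule empty.prems[of id]) (simp_all add: strict_mono_def)
next
  case (insert x S)
  obtain f where f: "strict_mono f" "\<forall>j\<in>S. incseq (\<lambda>n. s (f n) j)"
    using insert.IH by blast
  obtain g where g: "strict_mono g" "incseq (\<lambda>n. s (f (g n)) x)"
    using wellorder_seq_incseq_subseq[of "\<lambda>n. s (f n) x"] by blast
  have "incseq (\<lambda>n. s (f (g n)) j)" if "j \<in> S" for j
    using f(2) that strict_mono_mono[OF g(1)] by (auto simp: incseq_def mono_def)
  moreover have "strict_mono (\<lambda>n. f (g n))"
    using f(1) g(1) by (simp add: strict_mono_def)
  ultimately show ?case
    using g(2) insert.prems by blast
qed

lemma dickson:
  fixes s :: "nat \<Rightarrow> 'g::finite \<Rightarrow> 'a::wellorder"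
  obtains i j where "i < j" "s i \<le> s j"
proof -
  obtain r where r: "strict_mono r" "\<forall>j. incseq (\<lambda>n. s (r n) j)"
    using incseq_subseq_on_coordinates[of UNIV s] by auto
  have "r 0 < r 1" "s (r 0) \<le> s (r 1)"
    using r by (simp_all add: strict_mono_def le_fun_def incseq_def)
  then show thesis using that by blast
qed

lemma finite_minimal_elements:
  fixes U :: "('g::finite \<Rightarrow> 'a::wellorder) set"
  shows "finite {m\<in>U. \<forall>\<beta>\<in>U. \<beta> \<le> m \<longrightarrow> \<beta> = m}" (is "finite ?M")
proof (rule ccontr)
  assume "infinite ?M"
  then obtain s :: "nat \<Rightarrow> _" where s: "inj s" "range s \<subseteq> ?M"
    using infinite_countable_subset by blast
  obtain i j where "i < j" "s i \<le> s j"
    using dickson by blast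
  moreover have "s i \<in> ?M" "s j \<in> ?M"
    using s(2) by auto
  ultimately have "s i = s j"
    by blast
  then show False
    using injD[OF s(1)] \<open>i < j\<close> by blast
qed

lemma ex_minimal_below:
  fixes U :: "('g::finite \<Rightarrow> nat) set"
  assumes "\<alpha> \<in> U"
  obtains m where "m \<in> U" "m \<le> \<alpha>" "\<forall>\<beta>\<in>U. \<beta> \<le> m \<longrightarrow> \<beta> = m"
proof -
  obtain m where m: "m \<in> U \<and> m \<le> \<alpha>"
    and least: "\<And>\<gamma>. \<gamma> \<in> U \<and> \<gamma> \<le> \<alpha> \<Longrightarrow> sum m UNIV \<le> sum \<gamma> UNIV"
    using ex_has_least_nat[of "\<lambda>\<beta>. \<beta> \<in> U \<and> \<beta> \<le> \<alpha>" \<alpha> "\<lambda>\<beta>. sum \<beta> UNIV"] assms by auto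
  have "\<beta> = m" if "\<beta> \<in> U" "\<beta> \<le> m" for \<beta>
  proof (rule ccontr)
    assume "\<beta> \<noteq> m"
    then obtain j where "\<beta> j \<noteq> m j"
      by auto
    then have "\<beta> j < m j"
      using \<open>\<beta> \<le> m\<close> by (simp add: le_fun_def order_less_le)
    then have "sum \<beta> UNIV < sum m UNIV"
      using \<open>\<beta> \<le> m\<close> by (intro sum_strict_mono_ex1) (auto simp: le_fun_def)
    moreover have "sum m UNIV \<le> sum \<beta> UNIV"
      using least m that order_trans by blast
    ultimately show False by simp
  qed
  then show thesis using that m by blast
qed

definition box :: "'g set \<Rightarrow> ('g \<Rightarrow> nat) \<Rightarrow> ('g \<Rightarrow> nat) set" where
  "box J b = {\<alpha>. \<forall>j. j \<notin> J \<longrightarrow> \<alpha> j < b j}"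

lemma box_Int_less:
  "box J b \<inter> {\<alpha>. \<alpha> j < n} = box (J - {j}) (b(j := if j \<in> J then n else min (b j) n))"
  unfolding box_def by auto

lemma not_above_finite_eq_Union_boxes:
  fixes M :: "('g::finite \<Rightarrow> nat) set"
  assumes "finite M"
  obtains F where "finite F" "{\<alpha>. \<forall>m\<in>M. \<not> m \<le> \<alpha>} = (\<Union>(J, b)\<in>F. box J b)"
  using assms
proof (induction M arbitrary: thesis rule: finite_induct)
  case empty
  show ?case
    by (rule empty.prems[of "{(UNIV, \<lambda>_. 0)}"]) (auto simp: box_def)
next
  case (insert m M)
  obtain F where F: "finite F" "{\<alpha>. \<forall>m\<in>M. \<not> m \<le> \<alpha>} = (\<Union>(J, b)\<in>F. box J b)"
    using insert.IH by blast
  define cut where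
    "cut = (\<lambda>((J, b), j). (J - {j}, b(j := if j \<in> J then m j else min (b j) (m j))))"
  have not_above: "\<not> m \<le> \<alpha> \<longleftrightarrow> (\<exists>j. \<alpha> j < m j)" for \<alpha>
    by (auto simp: le_fun_def not_le)
  have "{\<alpha>. \<forall>m'\<in>insert m M. \<not> m' \<le> \<alpha>} = {\<alpha>. \<forall>m\<in>M. \<not> m \<le> \<alpha>} \<inter> (\<Union>j. {\<alpha>. \<alpha> j < m j})"
    using not_above by auto
  also have "\<dots> = (\<Union>((J, b), j)\<in>F \<times> UNIV. box J b \<inter> {\<alpha>. \<alpha> j < m j})"
    unfolding F(2) by auto
  also have "\<dots> = (\<Union>((J, b), j)\<in>F \<times> UNIV. case cut ((J, b), j) of (J', b') \<Rightarrow> box J' b')"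
    unfolding box_Int_less cut_def by simp
  also have "\<dots> = (\<Union>(J, b)\<in>cut ` (F \<times> UNIV). box J b)"
    by (simp add: image_image case_prod_beta)
  finally show ?case
    using insert.prems F(1) by (metis finite_SigmaI finite_UNIV finite_imageI)
qed

lemma downward_closed_eq_Union_boxes:
  fixes D :: "('g::finite \<Rightarrow> nat) set"
  assumes "\<And>\<alpha> \<beta>. \<alpha> \<in> D \<Longrightarrow> \<beta> \<le> \<alpha> \<Longrightarrow> \<beta> \<in> D"
  obtains F where "finite F" "D = (\<Union>(J, b)\<in>F. box J b)"
proof -
  define M where "M = {m\<in>-D. \<forall>\<beta>\<in>-D. \<beta> \<le> m \<longrightarrow> \<beta> = m}"
  have "D = {\<alpha>. \<forall>m\<in>M. \<not> m \<le> \<alpha>}"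
  proof (intro set_eqI iffI)
    fix \<alpha> assume "\<alpha> \<in> D"
    then show "\<alpha> \<in> {\<alpha>. \<forall>m\<in>M. \<not> m \<le> \<alpha>}"
      using assms unfolding M_def by blast
  next
    fix \<alpha> assume \<alpha>: "\<alpha> \<in> {\<alpha>. \<forall>m\<in>M. \<not> m \<le> \<alpha>}"
    show "\<alpha> \<in> D"
    proof (rule ccontr)
      assume "\<alpha> \<notin> D"
      then obtain m where "m \<in> M" "m \<le> \<alpha>"
        using ex_minimal_below[of \<alpha> "-D"] unfolding M_def by auto
      then show False
        using \<alpha> by blast
    qed
  qed
  moreover obtain F where "finite F" "{\<alpha>. \<forall>m\<in>M. \<not> m \<le> \<alpha>} = (\<Union>(J, b)\<in>F. box J b)"
    using not_above_finite_eq_Union_boxes[OF finite_minimal_elements] unfolding M_def by blast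
  ultimately show thesis
    using that by simp
qed

section \<open>Eventually affine functions\<close>

definition eventually_affine :: "nat set \<Rightarrow> (int \<Rightarrow> ereal) \<Rightarrow> bool" where
  "eventually_affine S h \<longleftrightarrow>
     (\<forall>\<^sub>F v in at_top. h v = -\<infinity>) \<or>
     (\<exists>\<delta>\<in>S. \<exists>c. \<forall>\<^sub>F v in at_top. h v = ereal (of_int (int \<delta> * v + c)))"

lemma eventually_affine_cong:
  assumes "\<forall>\<^sub>F v in at_top. h v = g v" and "eventually_affine S g"
  shows "eventually_affine S h"
proof -
  consider (bot) "\<forall>\<^sub>F v in at_top. g v = -\<infinity>"
    | (affine) \<delta> c where "\<delta> \<in> S" "\<forall>\<^sub>F v in at_top. g v = ereal (of_int (int \<delta> * v + c))"
    using assms(2) unfolding eventually_affine_def by blast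
  then show ?thesis
  proof cases
    case bot
    with assms(1) have "\<forall>\<^sub>F v in at_top. h v = -\<infinity>"
      by eventually_elim simp
    then show ?thesis
      unfolding eventually_affine_def by blast
  next
    case affine
    from affine(2) assms(1) have "\<forall>\<^sub>F v in at_top. h v = ereal (of_int (int \<delta> * v + c))"
      by eventually_elim simp
    then show ?thesis
      unfolding eventually_affine_def using affine(1) by blast
  qed
qed

lemma eventually_le_steeper_line:
  fixes c1 c2 :: int
  assumes "\<delta>2 < \<delta>1"
  shows "\<forall>\<^sub>F v in at_top. int \<delta>2 * v + c2 \<le> int \<delta>1 * v + c1"
  using eventually_ge_at_top[of "max 0 (c2 - c1)"]
proof eventually_elim
  case (elim v)
  have "v \<le> (int \<delta>1 - int \<delta>2) * v"
    using assms elim by (simp add: mult_le_cancel_right1)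
  then show ?case
    using elim by (simp add: algebra_simps)
qed

lemma eventually_max_affine:
  fixes c1 c2 :: int
  obtains \<delta> c where "\<delta> \<in> {\<delta>1, \<delta>2}"
    "\<forall>\<^sub>F v in at_top. max (int \<delta>1 * v + c1) (int \<delta>2 * v + c2) = int \<delta> * v + c"
proof (cases \<delta>1 \<delta>2 rule: linorder_cases)
  case less
  show thesis
    by (rule that[of \<delta>2 c2]) (use eventually_le_steeper_line[OF less, of c1 c2] in \<open>auto elim: eventually_mono\<close>)
next
  case equal
  show thesis
    by (rule that[of \<delta>1 "max c1 c2"]) (simp_all add: equal flip: max_add_distrib_right)
next
  case greater
  show thesis
    by (rule that[of \<delta>1 c1]) (use eventually_le_steeper_line[OF greater, of c2 c1] in \<open>auto elim: eventually_mono\<close>)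
qed

lemma eventually_affine_max:
  assumes h1: "eventually_affine S h1" and h2: "eventually_affine S h2"
  shows "eventually_affine S (\<lambda>v. max (h1 v) (h2 v))"
proof (cases "\<forall>\<^sub>F v in at_top. h1 v = -\<infinity>")
  case True
  then have "\<forall>\<^sub>F v in at_top. max (h1 v) (h2 v) = h2 v"
    by eventually_elim simp
  then show ?thesis
    using h2 by (rule eventually_affine_cong)
next
  case h1_affine: False
  show ?thesis
  proof (cases "\<forall>\<^sub>F v in at_top. h2 v = -\<infinity>")
    case True
    then have "\<forall>\<^sub>F v in at_top. max (h1 v) (h2 v) = h1 v"
      by eventually_elim simp
    then show ?thesis
      using h1 by (rule eventually_affine_cong)
  next
    case h2_affine: False
    obtain \<delta>1 c1 where \<delta>1: "\<delta>1 \<in> S"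
      and eq1: "\<forall>\<^sub>F v in at_top. h1 v = ereal (of_int (int \<delta>1 * v + c1))"
      using h1 h1_affine unfolding eventually_affine_def by blast
    obtain \<delta>2 c2 where \<delta>2: "\<delta>2 \<in> S"
      and eq2: "\<forall>\<^sub>F v in at_top. h2 v = ereal (of_int (int \<delta>2 * v + c2))"
      using h2 h2_affine unfolding eventually_affine_def by blast
    obtain \<delta> c where \<delta>: "\<delta> \<in> {\<delta>1, \<delta>2}"
      and max_eq: "\<forall>\<^sub>F v in at_top. max (int \<delta>1 * v + c1) (int \<delta>2 * v + c2) = int \<delta> * v + c"
      by (rule eventually_max_affine)
    have max_ereal_of_int: "max (ereal (of_int a)) (ereal (of_int b)) = ereal (of_int (max a b))"
      for a b :: int
      by (metis ereal_less_eq(3) max_def of_int_le_iff)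
    from eq1 eq2 max_eq have "\<forall>\<^sub>F v in at_top. max (h1 v) (h2 v) = ereal (of_int (int \<delta> * v + c))"
      by eventually_elim (simp only: max_ereal_of_int)
    moreover have "\<delta> \<in> S"
      using \<delta> \<delta>1 \<delta>2 by blast
    ultimately show ?thesis
      unfolding eventually_affine_def by blast
  qed
qed

lemma eventually_affine_SUP:
  assumes "finite I" and "\<And>i. i \<in> I \<Longrightarrow> eventually_affine S (h i)"
  shows "eventually_affine S (\<lambda>v. SUP i\<in>I. h i v)"
  using assms
proof (induction I rule: finite_induct)
  case empty
  show ?case
    unfolding eventually_affine_def by (simp add: bot_ereal_def)
next
  case (insert i I)
  then show ?case
    by (simp add: eventually_affine_max)
qed

lemma eventually_at_top_int_shift:
  fixes e :: int
  assumes "\<forall>\<^sub>F v in at_top. P v"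
  shows "\<forall>\<^sub>F v in at_top. P (v - e)"
proof -
  obtain N where "\<And>v. v \<ge> N \<Longrightarrow> P v"
    using assms unfolding eventually_at_top_linorder by blast
  then show ?thesis
    unfolding eventually_at_top_linorder by (intro exI[of _ "N + e"]) simp
qed

lemma eventually_affine_shift:
  fixes a e :: int
  assumes "eventually_affine S h"
  shows "eventually_affine S (\<lambda>v. h (v - e) + ereal (of_int a))"
proof -
  consider (bot) "\<forall>\<^sub>F v in at_top. h v = -\<infinity>"
    | (affine) \<delta> c where "\<delta> \<in> S" "\<forall>\<^sub>F v in at_top. h v = ereal (of_int (int \<delta> * v + c))"
    using assms unfolding eventually_affine_def by blast
  then show ?thesis
  proof cases
    case bot
    then have "\<forall>\<^sub>F v in at_top. h (v - e) + ereal (of_int a) = -\<infinity>"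
      by (rule eventually_at_top_int_shift[where e = e, THEN eventually_mono]) simp
    then show ?thesis
      unfolding eventually_affine_def by blast
  next
    case affine
    have shifted: "int \<delta> * (v - e) + c + a = int \<delta> * v + (c - int \<delta> * e + a)" for v
      by (simp add: algebra_simps)
    from affine(2) have "\<forall>\<^sub>F v in at_top.
        h (v - e) + ereal (of_int a) = ereal (of_int (int \<delta> * v + (c - int \<delta> * e + a)))"
      by (rule eventually_at_top_int_shift[where e = e, THEN eventually_mono]) (simp flip: shifted)
    then show ?thesis
      unfolding eventually_affine_def using affine(1) by blast
  qed
qed

lemma SUP_ereal_of_int_add:
  fixes a :: int
  shows "(SUP x\<in>A. ereal (of_int (a + f x))) = (SUP x\<in>A. ereal (of_int (f x))) + ereal (of_int a)"
proof (cases "A = {}")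
  case True
  then show ?thesis
    by (simp add: bot_ereal_def)
next
  case False
  have "(SUP x\<in>A. ereal (of_int (a + f x))) = (SUP x\<in>A. ereal (of_int (f x)) + ereal (of_int a))"
    by (simp add: add.commute)
  also have "\<dots> = (SUP x\<in>A. ereal (of_int (f x))) + ereal (of_int a)"
    by (rule SUP_ereal_add_left[OF False]) simp
  finally show ?thesis .
qed

section \<open>Maximal weighted degrees on downward closed sets\<close>

definition weighted_degree :: "('g::finite \<Rightarrow> nat) \<Rightarrow> ('g \<Rightarrow> nat) \<Rightarrow> int" where
  "weighted_degree d \<alpha> = (\<Sum>j\<in>UNIV. int (\<alpha> j) * int (d j))"

definition total_degree :: "('g::finite \<Rightarrow> nat) \<Rightarrow> int" where
  "total_degree \<alpha> = (\<Sum>j\<in>UNIV. int (\<alpha> j))"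

definition max_weighted_degree :: "('g::finite \<Rightarrow> nat) \<Rightarrow> ('g \<Rightarrow> nat) set \<Rightarrow> int \<Rightarrow> ereal" where
  "max_weighted_degree d D n =
     (SUP \<alpha>\<in>{\<alpha>\<in>D. total_degree \<alpha> = n}. ereal (of_int (weighted_degree d \<alpha>)))"

lemma max_weighted_degree_UN:
  "max_weighted_degree d (\<Union>i\<in>I. D i) n = (SUP i\<in>I. max_weighted_degree d (D i) n)"
proof -
  have "{\<alpha>\<in>(\<Union>i\<in>I. D i). total_degree \<alpha> = n} = (\<Union>i\<in>I. {\<alpha>\<in>D i. total_degree \<alpha> = n})"
    by blast
  then show ?thesis
    unfolding max_weighted_degree_def by (simp add: SUP_UNION)
qed

lemma weighted_degree_minus_total_degree:
  "weighted_degree d \<alpha> - int \<delta> * total_degree \<alpha> = (\<Sum>j\<in>UNIV. int (\<alpha> j) * (int (d j) - int \<delta>))"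
  unfolding weighted_degree_def total_degree_def
  by (simp add: sum_distrib_left sum_subtractf algebra_simps)

definition box_offset :: "('g::finite \<Rightarrow> nat) \<Rightarrow> 'g set \<Rightarrow> ('g \<Rightarrow> nat) \<Rightarrow> nat \<Rightarrow> int" where
  "box_offset d J b \<delta> =
     (\<Sum>j\<in>UNIV. if j \<in> J then 0 else max (int (d j) - int \<delta>) 0 * (int (b j) - 1))"

lemma weighted_degree_le_box:
  assumes "\<alpha> \<in> box J b" and "\<forall>j\<in>J. d j \<le> \<delta>"
  shows "weighted_degree d \<alpha> \<le> int \<delta> * total_degree \<alpha> + box_offset d J b \<delta>"
proof -
  have "int (\<alpha> j) * (int (d j) - int \<delta>)
      \<le> (if j \<in> J then 0 else max (int (d j) - int \<delta>) 0 * (int (b j) - 1))" for j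
  proof (cases "j \<in> J")
    case True
    then show ?thesis
      using assms(2) by (simp add: mult_nonneg_nonpos)
  next
    case False
    then have "int (\<alpha> j) \<le> int (b j) - 1"
      using assms(1) unfolding box_def by fastforce
    then have "int (\<alpha> j) * max (int (d j) - int \<delta>) 0 \<le> (int (b j) - 1) * max (int (d j) - int \<delta>) 0"
      by (intro mult_right_mono) auto
    moreover have "int (\<alpha> j) * (int (d j) - int \<delta>) \<le> int (\<alpha> j) * max (int (d j) - int \<delta>) 0"
      by (intro mult_left_mono) auto
    ultimately show ?thesis
      using False by (simp add: mult.commute)
  qed
  then have "weighted_degree d \<alpha> - int \<delta> * total_degree \<alpha> \<le> box_offset d J b \<delta>"
    unfolding weighted_degree_minus_total_degree box_offset_def by (rule sum_mono)
  then show ?thesis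
    by simp
qed

lemma weighted_degree_attained_in_box:
  assumes "js \<in> J" and "\<forall>j. j \<notin> J \<longrightarrow> b j \<ge> 1" and "n \<ge> (\<Sum>j\<in>UNIV. int (b j))"
  obtains \<alpha> where "\<alpha> \<in> box J b" "total_degree \<alpha> = n"
    "weighted_degree d \<alpha> = int (d js) * n + box_offset d J b (d js)"
proof -
  define \<delta> where "\<delta> = d js"
  \<comment> \<open>bounded coordinates of weight above \<delta> are filled up, the rest of the degree goes to js\<close>
  define \<alpha>0 where "\<alpha>0 j = (if j \<notin> J \<and> d j > \<delta> then b j - 1 else 0)" for j
  define t where "t = nat (n - total_degree \<alpha>0)"
  define \<alpha> where "\<alpha> j = \<alpha>0 j + (if j = js then t else 0)" for j
  have "total_degree \<alpha>0 \<le> (\<Sum>j\<in>UNIV. int (b j))"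
    unfolding total_degree_def \<alpha>0_def by (intro sum_mono) auto
  then have t: "int t = n - total_degree \<alpha>0"
    using assms(3) unfolding t_def by simp
  have \<alpha>_int: "int (\<alpha> j) = int (\<alpha>0 j) + (if j = js then int t else 0)" for j
    by (simp add: \<alpha>_def)
  have total: "total_degree \<alpha> = total_degree \<alpha>0 + int t"
    unfolding total_degree_def \<alpha>_int by (simp add: sum.distrib)
  have "int (\<alpha> j) * int (d j) = int (\<alpha>0 j) * int (d j) + (if j = js then int t * int \<delta> else 0)" for j
    by (simp add: \<alpha>_int distrib_right \<delta>_def)
  then have weighted: "weighted_degree d \<alpha> = weighted_degree d \<alpha>0 + int t * int \<delta>"
    unfolding weighted_degree_def by (simp add: sum.distrib)
  have "int (\<alpha>0 j) * (int (d j) - int \<delta>)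
      = (if j \<in> J then 0 else max (int (d j) - int \<delta>) 0 * (int (b j) - 1))" for j
    using assms(2) unfolding \<alpha>0_def by (auto simp: of_nat_diff)
  then have offset: "weighted_degree d \<alpha>0 - int \<delta> * total_degree \<alpha>0 = box_offset d J b \<delta>"
    unfolding weighted_degree_minus_total_degree box_offset_def by (rule sum.cong[OF refl])
  show thesis
  proof (rule that)
    show "\<alpha> \<in> box J b"
      unfolding box_def \<alpha>_def \<alpha>0_def using assms(1,2) by auto
    show "total_degree \<alpha> = n"
      using total t by simp
    show "weighted_degree d \<alpha> = int (d js) * n + box_offset d J b (d js)"
      using weighted offset t unfolding \<delta>_def by (simp add: algebra_simps)
  qed
qed

lemma max_weighted_degree_bounded_box:
  assumes "J = {} \<or> (\<exists>j. j \<notin> J \<and> b j = 0)" and "n > (\<Sum>j\<in>UNIV. int (b j))"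
  shows "max_weighted_degree d (box J b) n = -\<infinity>"
proof -
  have "total_degree \<alpha> \<noteq> n" if "\<alpha> \<in> box J b" for \<alpha>
  proof -
    have "J = {}"
      using assms(1) that unfolding box_def by auto
    then have "total_degree \<alpha> \<le> (\<Sum>j\<in>UNIV. int (b j))"
      using that unfolding box_def total_degree_def by (intro sum_mono) (simp add: less_imp_le)
    then show ?thesis
      using assms(2) by simp
  qed
  then have no_vectors: "{\<alpha>\<in>box J b. total_degree \<alpha> = n} = {}"
    by blast
  show ?thesis
    unfolding max_weighted_degree_def no_vectors by (simp add: bot_ereal_def)
qed

lemma max_weighted_degree_unbounded_box:
  assumes "js \<in> J" and "\<forall>j\<in>J. d j \<le> d js" and "\<forall>j. j \<notin> J \<longrightarrow> b j \<ge> 1"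
    and "n \<ge> (\<Sum>j\<in>UNIV. int (b j))"
  shows "max_weighted_degree d (box J b) n = ereal (of_int (int (d js) * n + box_offset d J b (d js)))"
  unfolding max_weighted_degree_def
proof (rule antisym)
  show "(SUP \<alpha>\<in>{\<alpha>\<in>box J b. total_degree \<alpha> = n}. ereal (of_int (weighted_degree d \<alpha>)))
      \<le> ereal (of_int (int (d js) * n + box_offset d J b (d js)))"
  proof (rule SUP_least)
    fix \<alpha> assume "\<alpha> \<in> {\<alpha>\<in>box J b. total_degree \<alpha> = n}"
    then have "weighted_degree d \<alpha> \<le> int (d js) * n + box_offset d J b (d js)"
      using weighted_degree_le_box[OF _ assms(2)] by blast
    then show "ereal (of_int (weighted_degree d \<alpha>))
        \<le> ereal (of_int (int (d js) * n + box_offset d J b (d js)))"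
      by (simp only: ereal_less_eq of_int_le_iff)
  qed
  obtain \<alpha> where "\<alpha> \<in> box J b" "total_degree \<alpha> = n"
    "weighted_degree d \<alpha> = int (d js) * n + box_offset d J b (d js)"
    using weighted_degree_attained_in_box[OF assms(1,3,4)] .
  then show "ereal (of_int (int (d js) * n + box_offset d J b (d js)))
      \<le> (SUP \<alpha>\<in>{\<alpha>\<in>box J b. total_degree \<alpha> = n}. ereal (of_int (weighted_degree d \<alpha>)))"
    by (intro SUP_upper2[of \<alpha>]) auto
qed

lemma max_weighted_degree_box:
  "eventually_affine (d ` UNIV) (max_weighted_degree d (box J b))"
proof (cases "J \<noteq> {} \<and> (\<forall>j. j \<notin> J \<longrightarrow> b j \<ge> 1)")
  case True
  then have "Max (d ` J) \<in> d ` J"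
    by (intro Max_in) auto
  then obtain js where js: "js \<in> J" "d js = Max (d ` J)"
    by auto
  then have "\<forall>j\<in>J. d j \<le> d js"
    by simp
  then have "max_weighted_degree d (box J b) n = ereal (of_int (int (d js) * n + box_offset d J b (d js)))"
    if "n \<ge> (\<Sum>j\<in>UNIV. int (b j))" for n
    using js(1) True that by (intro max_weighted_degree_unbounded_box) auto
  then have "\<forall>\<^sub>F n in at_top.
      max_weighted_degree d (box J b) n = ereal (of_int (int (d js) * n + box_offset d J b (d js)))"
    by (rule eventually_mono[OF eventually_ge_at_top[of "\<Sum>j\<in>UNIV. int (b j)"]])
  then show ?thesis
    unfolding eventually_affine_def by blast
next
  case False
  then have "J = {} \<or> (\<exists>j. j \<notin> J \<and> b j = 0)"
    by (auto simp: Suc_le_eq)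
  then have "max_weighted_degree d (box J b) n = -\<infinity>" if "n > (\<Sum>j\<in>UNIV. int (b j))" for n
    using that by (rule max_weighted_degree_bounded_box)
  then have "\<forall>\<^sub>F n in at_top. max_weighted_degree d (box J b) n = -\<infinity>"
    by (rule eventually_mono[OF eventually_gt_at_top[of "\<Sum>j\<in>UNIV. int (b j)"]])
  then show ?thesis
    unfolding eventually_affine_def by blast
qed

lemma max_weighted_degree_downward_closed:
  assumes "\<And>\<alpha> \<beta>. \<alpha> \<in> D \<Longrightarrow> \<beta> \<le> \<alpha> \<Longrightarrow> \<beta> \<in> D"
  shows "eventually_affine (d ` UNIV) (max_weighted_degree d D)"
proof -
  obtain F where F: "finite F" "D = (\<Union>(J, b)\<in>F. box J b)"
    using downward_closed_eq_Union_boxes assms by blast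
  have "eventually_affine (d ` UNIV) (\<lambda>n. SUP (J, b)\<in>F. max_weighted_degree d (box J b) n)"
    using F(1) by (rule eventually_affine_SUP) (simp add: case_prod_beta max_weighted_degree_box)
  then show ?thesis
    unfolding F(2) max_weighted_degree_UN by (simp add: case_prod_beta)
qed

section \<open>Graded modules\<close>

definition Ypow :: "('g::finite \<Rightarrow> nat) \<Rightarrow> ('g \<Rightarrow>\<^sub>0 nat) \<Rightarrow>\<^sub>0 'r::comm_ring_1" where
  "Ypow \<alpha> = Poly_Mapping.single (Abs_poly_mapping \<alpha>) 1"

lemma monodeg_Abs_poly_mapping:
  "monodeg d (Abs_poly_mapping \<alpha>) = (weighted_degree d \<alpha>, total_degree \<alpha>)"
  by (simp add: monodeg_def weighted_degree_def total_degree_def)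

lemma Ypow_mult: "Ypow \<alpha> * Ypow \<beta> = Ypow (\<lambda>j. \<alpha> j + \<beta> j)"
proof -
  have "Abs_poly_mapping (\<lambda>j. \<alpha> j + \<beta> j) = Abs_poly_mapping \<alpha> + Abs_poly_mapping \<beta>"
    by (rule poly_mapping_eqI) (simp add: lookup_add)
  then show ?thesis
    by (simp add: Ypow_def mult_single)
qed

lemma single_eq_const_mult_Ypow:
  "Poly_Mapping.single \<alpha> c = const c * Ypow (Poly_Mapping.lookup \<alpha>)"
  by (simp add: const_def Ypow_def mult_single)

lemma poly_mapping_eq_sum_single:
  "p = (\<Sum>\<alpha>\<in>Poly_Mapping.keys p. Poly_Mapping.single \<alpha> (Poly_Mapping.lookup p \<alpha>))"
  by (rule poly_mapping_eqI) (auto simp: lookup_sum lookup_single when_def in_keys_iff)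

lemma module_constant_scalars:
  assumes "module (sc :: ('a::comm_monoid_add \<Rightarrow>\<^sub>0 'r::comm_ring_1) \<Rightarrow> 'm::ab_group_add \<Rightarrow> 'm)"
  shows "module (\<lambda>c. sc (Poly_Mapping.single 0 c))"
proof
  interpret module sc by (rule assms)
  fix a b :: 'r and x y :: 'm
  show "sc (Poly_Mapping.single 0 a) (x + y) = sc (Poly_Mapping.single 0 a) x + sc (Poly_Mapping.single 0 a) y"
    by (rule scale_right_distrib)
  show "sc (Poly_Mapping.single 0 (a + b)) x = sc (Poly_Mapping.single 0 a) x + sc (Poly_Mapping.single 0 b) x"
    unfolding single_add by (rule scale_left_distrib)
  show "sc (Poly_Mapping.single 0 a) (sc (Poly_Mapping.single 0 b) x) = sc (Poly_Mapping.single 0 (a * b)) x"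
    by (simp add: mult_single)
  show "sc (Poly_Mapping.single 0 1) x = x"
    by simp
qed

lemma span_eq_sum_monomial_multiples:
  fixes sc :: "('a::comm_monoid_add \<Rightarrow>\<^sub>0 'r::comm_ring_1) \<Rightarrow> 'm::ab_group_add \<Rightarrow> 'm"
  assumes "module sc" and "y \<in> module.span sc G"
  obtains T c where "finite T" "T \<subseteq> G \<times> UNIV"
    "y = (\<Sum>(z, \<alpha>)\<in>T. sc (Poly_Mapping.single \<alpha> (c z \<alpha>)) z)"
proof -
  interpret module sc by (rule assms(1))
  obtain S u where S: "finite S" "S \<subseteq> G" "y = (\<Sum>z\<in>S. sc (u z) z)"
    using assms(2) unfolding span_explicit by blast
  define T where "T = Sigma S (\<lambda>z. Poly_Mapping.keys (u z))"
  have "sc (u z) z = (\<Sum>\<alpha>\<in>Poly_Mapping.keys (u z). sc (Poly_Mapping.single \<alpha> (Poly_Mapping.lookup (u z) \<alpha>)) z)"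
    for z
    by (subst poly_mapping_eq_sum_single) (simp only: scale_sum_left)
  then have "y = (\<Sum>z\<in>S. \<Sum>\<alpha>\<in>Poly_Mapping.keys (u z). sc (Poly_Mapping.single \<alpha> (Poly_Mapping.lookup (u z) \<alpha>)) z)"
    unfolding S(3) by (rule sum.cong[OF refl])
  also have "\<dots> = (\<Sum>(z, \<alpha>)\<in>T. sc (Poly_Mapping.single \<alpha> (Poly_Mapping.lookup (u z) \<alpha>)) z)"
    unfolding T_def using S(1) by (rule sum.Sigma) simp
  finally have "y = (\<Sum>(z, \<alpha>)\<in>T. sc (Poly_Mapping.single \<alpha> (Poly_Mapping.lookup (u z) \<alpha>)) z)" .
  moreover have "finite T" "T \<subseteq> G \<times> UNIV"
    unfolding T_def using S(1,2) by auto
  ultimately show thesis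
    by (intro that[of T "\<lambda>z \<alpha>. Poly_Mapping.lookup (u z) \<alpha>"])
qed

lemma Ypow_nonzero_downward_closed:
  fixes sc :: "(('g::finite \<Rightarrow>\<^sub>0 nat) \<Rightarrow>\<^sub>0 'r::comm_ring_1) \<Rightarrow> 'm::ab_group_add \<Rightarrow> 'm"
  assumes "module sc" and "sc (Ypow \<alpha>) z \<noteq> 0" and "\<beta> \<le> \<alpha>"
  shows "sc (Ypow \<beta>) z \<noteq> 0"
proof
  interpret module sc
    by (rule assms(1))
  assume "sc (Ypow \<beta>) z = 0"
  have "(\<lambda>j. \<alpha> j - \<beta> j + \<beta> j) = \<alpha>"
    using assms(3) by (simp add: le_fun_def)
  then have "(Ypow \<alpha> :: ('g \<Rightarrow>\<^sub>0 nat) \<Rightarrow>\<^sub>0 'r) = Ypow (\<lambda>j. \<alpha> j - \<beta> j) * Ypow \<beta>"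
    by (simp add: Ypow_mult)
  then have "sc (Ypow \<alpha>) z = sc (Ypow (\<lambda>j. \<alpha> j - \<beta> j)) (sc (Ypow \<beta>) z)"
    by (simp only: scale_scale)
  then show False
    using assms(2) \<open>sc (Ypow \<beta>) z = 0\<close> by simp
qed

lemma graded_module_module: "graded_module d sc Nc \<Longrightarrow> module sc"
  unfolding graded_module_def by blast

lemma graded_module_subspace:
  "graded_module d sc Nc \<Longrightarrow> module.subspace (\<lambda>c. sc (const c)) (Nc k)"
  unfolding graded_module_def by blast

lemma graded_module_decomposition:
  "graded_module d sc Nc \<Longrightarrow>
     \<exists>!h. finite {k. h k \<noteq> 0} \<and> (\<forall>k. h k \<in> Nc k) \<and> x = (\<Sum>k | h k \<noteq> 0. h k)"
  unfolding graded_module_def by (elim conjE) (rule spec)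

lemma graded_module_scale:
  "graded_module d sc Nc \<Longrightarrow> p \<in> Ahom d a \<Longrightarrow> x \<in> Nc b \<Longrightarrow>
     sc p x \<in> Nc (fst a + fst b, snd a + snd b)"
  unfolding graded_module_def by blast

lemma graded_module_zero:
  assumes "graded_module d sc Nc"
  shows "0 \<in> Nc k"
  using module.subspace_0[OF module_constant_scalars[OF graded_module_module[OF assms]]]
    graded_module_subspace[OF assms] unfolding const_def by blast

lemma graded_module_sum:
  assumes "graded_module d sc Nc" and "\<And>t. t \<in> T \<Longrightarrow> w t \<in> Nc k"
  shows "(\<Sum>t\<in>T. w t) \<in> Nc k"
  using module.subspace_sum[OF module_constant_scalars[OF graded_module_module[OF assms(1)]]]
    graded_module_subspace[OF assms(1)] assms(2) unfolding const_def by blast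

lemma graded_module_decomposition_unique:
  assumes "graded_module d sc Nc"
    and "finite {k. h k \<noteq> 0}" "\<forall>k. h k \<in> Nc k"
    and "finite {k. h' k \<noteq> 0}" "\<forall>k. h' k \<in> Nc k"
    and "(\<Sum>k | h k \<noteq> 0. h k) = (\<Sum>k | h' k \<noteq> 0. h' k)"
  shows "h = h'"
proof -
  let ?x = "\<Sum>k | h' k \<noteq> 0. h' k"
  have "\<exists>!g. finite {k. g k \<noteq> 0} \<and> (\<forall>k. g k \<in> Nc k) \<and> ?x = (\<Sum>k | g k \<noteq> 0. g k)"
    using assms(1) by (rule graded_module_decomposition)
  then show ?thesis
  proof (elim ex1E)
    fix g assume unique: "\<forall>g'. finite {k. g' k \<noteq> 0} \<and> (\<forall>k. g' k \<in> Nc k) \<and> ?x = (\<Sum>k | g' k \<noteq> 0. g' k)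
      \<longrightarrow> g' = g"
    have "h = g"
      by (rule unique[rule_format]) (use assms(2,3,6) in auto)
    moreover have "h' = g"
      by (rule unique[rule_format]) (use assms(4,5) in auto)
    ultimately show ?thesis
      by simp
  qed
qed

lemma graded_module_homogeneous_summand:
  assumes gm: "graded_module d sc Nc" and "finite T"
    and "\<And>t. t \<in> T \<Longrightarrow> w t \<in> Nc (\<kappa> t)"
    and "y = (\<Sum>t\<in>T. w t)" "y \<in> Nc k" "y \<noteq> 0"
  obtains t where "t \<in> T" "\<kappa> t = k" "w t \<noteq> 0"
proof -
  define h where "h k' = (\<Sum>t | t \<in> T \<and> \<kappa> t = k'. w t)" for k'
  define h' where "h' k' = (if k' = k then y else 0)" for k'
  have h_support: "{k'. h k' \<noteq> 0} \<subseteq> \<kappa> ` T"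
    unfolding h_def by (force elim: sum.not_neutral_contains_not_neutral)
  have "y = (\<Sum>k'\<in>\<kappa> ` T. h k')"
    unfolding assms(4) h_def using \<open>finite T\<close> by (rule sum.image_gen)
  also have "\<dots> = (\<Sum>k' | h k' \<noteq> 0. h k')"
    using h_support \<open>finite T\<close> by (intro sum.mono_neutral_right) auto
  finally have "(\<Sum>k' | h k' \<noteq> 0. h k') = (\<Sum>k' | h' k' \<noteq> 0. h' k')"
    using \<open>y \<noteq> 0\<close> by (simp add: h'_def)
  moreover have "finite {k'. h k' \<noteq> 0}"
    using h_support \<open>finite T\<close> by (simp add: finite_subset)
  moreover have "h k' \<in> Nc k'" for k'
    unfolding h_def using assms(3) by (intro graded_module_sum[OF gm]) blast
  moreover have "h' k' \<in> Nc k'" for k'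
    unfolding h'_def using assms(5) graded_module_zero[OF gm] by simp
  ultimately have "h = h'"
    by (intro graded_module_decomposition_unique[OF gm]) (auto simp: h'_def)
  then have "h k = y"
    by (simp add: h'_def)
  then have "(\<Sum>t | t \<in> T \<and> \<kappa> t = k. w t) \<noteq> 0"
    using \<open>y \<noteq> 0\<close> unfolding h_def by simp
  then obtain t where "t \<in> {t. t \<in> T \<and> \<kappa> t = k}" "w t \<noteq> 0"
    by (rule sum.not_neutral_contains_not_neutral)
  then show thesis
    using that by blast
qed

lemma graded_module_homogeneous_generators:
  assumes gm: "graded_module d sc Nc" and "finitely_generated sc"
  obtains G k where "finite G" "module.span sc G = UNIV" "\<forall>z\<in>G. z \<in> Nc (k z)"
proof -
  interpret module sc
    by (rule graded_module_module[OF gm])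
  obtain F where F: "finite F" "span F = UNIV"
    using assms(2) unfolding finitely_generated_def by blast
  have "\<forall>x. \<exists>h. finite {k. h k \<noteq> 0} \<and> (\<forall>k. h k \<in> Nc k) \<and> x = (\<Sum>k | h k \<noteq> 0. h k)"
    using graded_module_decomposition[OF gm] by (blast dest: ex1_implies_ex)
  from choice[OF this] obtain H where
    H: "\<forall>x. finite {k. H x k \<noteq> 0} \<and> (\<forall>k. H x k \<in> Nc k) \<and> x = (\<Sum>k | H x k \<noteq> 0. H x k)"
    by blast
  define G where "G = (\<Union>x\<in>F. H x ` {k. H x k \<noteq> 0})"
  have "\<exists>k. z \<in> Nc k" if "z \<in> G" for z
    using that H unfolding G_def by blast
  then have hom: "\<forall>z\<in>G. z \<in> Nc (SOME k. z \<in> Nc k)"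
    by (metis someI_ex)
  have fin: "finite G"
    unfolding G_def using F(1) H by auto
  have "x \<in> span G" if "x \<in> F" for x
  proof -
    have "(\<Sum>k | H x k \<noteq> 0. H x k) \<in> span G"
      using that by (intro span_sum span_base) (auto simp: G_def)
    then show ?thesis
      using H by metis
  qed
  then have "span F \<subseteq> span G"
    by (intro span_minimal) auto
  then have "span G = UNIV"
    using F(2) by blast
  with fin hom show thesis
    by (intro that)
qed

lemma graded_module_scale_single:
  assumes "graded_module d sc Nc" and "x \<in> Nc (i, v)"
  shows "sc (Poly_Mapping.single \<beta> c) x \<in> Nc (i + fst (monodeg d \<beta>), v + snd (monodeg d \<beta>))"
proof -
  have "Poly_Mapping.single \<beta> c \<in> Ahom d (monodeg d \<beta>)"
    by (simp add: Ahom_def)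
  then show ?thesis
    using graded_module_scale[OF assms(1)] assms(2) by (force simp: add.commute)
qed

lemma graded_module_scale_Ypow:
  assumes "graded_module d sc Nc" and "z \<in> Nc (i, v)"
  shows "sc (Ypow \<alpha>) z \<in> Nc (i + weighted_degree d \<alpha>, v + total_degree \<alpha>)"
  using graded_module_scale_single[OF assms, of "Abs_poly_mapping \<alpha>" 1]
  unfolding Ypow_def monodeg_Abs_poly_mapping by simp

lemma graded_module_nonzero_component_witness:
  assumes gm: "graded_module d sc Nc" and span: "module.span sc G = UNIV"
    and hom: "\<forall>z\<in>G. z \<in> Nc (k z)" and y: "y \<in> Nc (i, v)" "y \<noteq> 0"
  obtains z \<alpha> where "z \<in> G" "sc (Ypow \<alpha>) z \<noteq> 0"
    "i = fst (k z) + weighted_degree d \<alpha>" "v = snd (k z) + total_degree \<alpha>"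
proof -
  interpret module sc
    by (rule graded_module_module[OF gm])
  obtain T c where T: "finite T" "T \<subseteq> G \<times> UNIV"
    "y = (\<Sum>(z, \<beta>)\<in>T. sc (Poly_Mapping.single \<beta> (c z \<beta>)) z)"
    using span_eq_sum_monomial_multiples[OF module_axioms, of y G] span by blast
  define \<kappa> where "\<kappa> = (\<lambda>(z, \<beta>). (fst (k z) + fst (monodeg d \<beta>), snd (k z) + snd (monodeg d \<beta>)))"
  have "(\<lambda>(z, \<beta>). sc (Poly_Mapping.single \<beta> (c z \<beta>)) z) t \<in> Nc (\<kappa> t)" if "t \<in> T" for t
    using that T(2) hom graded_module_scale_single[OF gm, of _ "fst (k _)" "snd (k _)"]
    unfolding \<kappa>_def by auto
  then obtain t where t: "t \<in> T" "\<kappa> t = (i, v)"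
    "(\<lambda>(z, \<beta>). sc (Poly_Mapping.single \<beta> (c z \<beta>)) z) t \<noteq> 0"
    using graded_module_homogeneous_summand[OF gm T(1) _ T(3) y] by blast
  obtain z \<beta> where z\<beta>: "(z, \<beta>) \<in> T" "\<kappa> (z, \<beta>) = (i, v)"
    "sc (Poly_Mapping.single \<beta> (c z \<beta>)) z \<noteq> 0"
    using t by (cases t) simp
  define \<alpha> where "\<alpha> = Poly_Mapping.lookup \<beta>"
  have "sc (Ypow \<alpha>) z \<noteq> 0"
    using z\<beta>(3) by (auto simp: single_eq_const_mult_Ypow \<alpha>_def simp flip: scale_scale)
  moreover have "monodeg d \<beta> = (weighted_degree d \<alpha>, total_degree \<alpha>)"
    using monodeg_Abs_poly_mapping[of d \<alpha>] unfolding \<alpha>_def by simp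
  ultimately show thesis
    using that z\<beta>(1,2) T(2) unfolding \<kappa>_def by auto
qed

lemma graded_module_component_nonzero_iff:
  assumes gm: "graded_module d sc Nc" and span: "module.span sc G = UNIV"
    and hom: "\<forall>z\<in>G. z \<in> Nc (k z)"
  shows "Nc (i, v) \<noteq> {0} \<longleftrightarrow> (\<exists>z\<in>G. \<exists>\<alpha>. sc (Ypow \<alpha>) z \<noteq> 0 \<and>
           i = fst (k z) + weighted_degree d \<alpha> \<and> v = snd (k z) + total_degree \<alpha>)"
proof
  assume "Nc (i, v) \<noteq> {0}"
  then obtain y where "y \<in> Nc (i, v)" "y \<noteq> 0"
    using graded_module_zero[OF gm] by blast
  then obtain z \<alpha> where "z \<in> G" "sc (Ypow \<alpha>) z \<noteq> 0"
    "i = fst (k z) + weighted_degree d \<alpha>" "v = snd (k z) + total_degree \<alpha>"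
    by (rule graded_module_nonzero_component_witness[OF assms])
  then show "\<exists>z\<in>G. \<exists>\<alpha>. sc (Ypow \<alpha>) z \<noteq> 0 \<and>
      i = fst (k z) + weighted_degree d \<alpha> \<and> v = snd (k z) + total_degree \<alpha>"
    by blast
next
  assume "\<exists>z\<in>G. \<exists>\<alpha>. sc (Ypow \<alpha>) z \<noteq> 0 \<and>
      i = fst (k z) + weighted_degree d \<alpha> \<and> v = snd (k z) + total_degree \<alpha>"
  then show "Nc (i, v) \<noteq> {0}"
    using graded_module_scale_Ypow[OF gm] hom by fastforce
qed

lemma rho_eq_SUP_generators:
  assumes "graded_module d sc Nc" and "module.span sc G = UNIV" and "\<forall>z\<in>G. z \<in> Nc (k z)"
  shows "rho Nc v = (SUP z\<in>G. max_weighted_degree d {\<alpha>. sc (Ypow \<alpha>) z \<noteq> 0} (v - snd (k z))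
                                + ereal (of_int (fst (k z))))"
proof -
  define W where "W z = {\<alpha>\<in>{\<alpha>. sc (Ypow \<alpha>) z \<noteq> 0}. total_degree \<alpha> = v - snd (k z)}" for z
  have "{i. Nc (i, v) \<noteq> {0}} = (\<Union>z\<in>G. (\<lambda>\<alpha>. fst (k z) + weighted_degree d \<alpha>) ` W z)"
    unfolding graded_module_component_nonzero_iff[OF assms] W_def by force
  then have "rho Nc v = (SUP z\<in>G. SUP i\<in>(\<lambda>\<alpha>. fst (k z) + weighted_degree d \<alpha>) ` W z. ereal (of_int i))"
    unfolding rho_def by (simp only: SUP_UNION)
  also have "\<dots> = (SUP z\<in>G. SUP \<alpha>\<in>W z. ereal (of_int (fst (k z) + weighted_degree d \<alpha>)))"
    by (simp only: image_image)
  also have "\<dots> = (SUP z\<in>G. max_weighted_degree d {\<alpha>. sc (Ypow \<alpha>) z \<noteq> 0} (v - snd (k z))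
                              + ereal (of_int (fst (k z))))"
    unfolding max_weighted_degree_def W_def SUP_ereal_of_int_add ..
  finally show ?thesis .
qed

theorem lemma3p3:
  fixes d :: "'g::finite \<Rightarrow> nat"
    and sc :: "(('g \<Rightarrow>\<^sub>0 nat) \<Rightarrow>\<^sub>0 'r::comm_ring_1) \<Rightarrow> 'm::ab_group_add \<Rightarrow> 'm"
    and Nc :: "int \<times> int \<Rightarrow> 'm set"
  assumes "noetherian TYPE('r)"
    and "graded_module d sc Nc"
    and "finitely_generated sc"
  shows "\<exists>v0::int. (\<forall>v\<ge>v0. rho Nc v = -\<infinity>) \<or>
           (\<exists>\<delta>\<in>d ` UNIV. \<exists>c::int. \<forall>v\<ge>v0. rho Nc v = ereal (of_int (int \<delta> * v + c)))"
proof -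
  obtain G k where G: "finite G" "module.span sc G = UNIV" "\<forall>z\<in>G. z \<in> Nc (k z)"
    using graded_module_homogeneous_generators[OF assms(2,3)] .
  have rho: "rho Nc = (\<lambda>v. SUP z\<in>G.
      max_weighted_degree d {\<alpha>. sc (Ypow \<alpha>) z \<noteq> 0} (v - snd (k z)) + ereal (of_int (fst (k z))))"
    using rho_eq_SUP_generators[OF assms(2) G(2,3)] by blast
  have "eventually_affine (d ` UNIV) (rho Nc)"
    unfolding rho using G(1) Ypow_nonzero_downward_closed[OF graded_module_module[OF assms(2)]]
    by (intro eventually_affine_SUP eventually_affine_shift max_weighted_degree_downward_closed) auto
  then show ?thesis
    unfolding eventually_affine_def eventually_at_top_linorder by blast
qed

end
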